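(* Let $k>0$, $a\in(0,1)$, $d>0$, assume $g$ satisfies (Hg) and that (Hd) holds. Define $\phi:\mathbb R^2\to\mathbb R^2$ by $$\phi(u,v)=\Big(\frac{k+1}{k}u-\frac1k v-\frac{g(u;a)}{kd},\ u\Big).$$ Then there exist horizontal strips $U_0,U_1$ with $U_0\cap U_1=\emptyset$ and vertical strips $V_0,V_1$ with $V_0\cap V_1=\emptyset$, all contained in $[0,1]^2$, such that for $n\in\{0,1\}$: $\phi(V_n)=U_n$, $\phi$ maps the vertical boundaries of $V_n$ onto the vertical boundaries of $U_n$, and maps the horizontal boundaries of $V_n$ onto the horizontal boundaries of $U_n$.
   Context: A function $g:\mathbb R\times[0,1]\to\mathbb R$, $(u,a)\mapsto g(u;a)$, satisfies (Hg) if it is $C^1$ and for every $a\in(0,1)$: $g(0;a)=g(a;a)=g(1;a)=0$, $g'(0;a)<0$, $g'(1;a)<0$, $g'(a;a)>0$ (where $g'=\partial_u g$), $g(v;a)>0$ for $v\in(-\infty,0)\cup(a,1)$ and $g(v;a)<0$ for $v\in(0,a)\cup(1,\infty)$. Let $h(v;a,d)=(k+1)v-\frac1d g(v;a)$. Condition (Hd): there exist $y_0\in(0,a)$ and $y_1\in(a,1)$ with $h(y_0;a,d)>k+1$, $h(y_1;a,d)<0$, and $\partial_v h(v;a,d)>0$ for $v\in(0,y_0)\cup(y_1,1)$. A horizontal curve is the graph $v=v(u)$ of a continuous function on $[0,1]$ with $0\le v(u)\le1$; a vertical curve is the graph $u=u(v)$ of a continuous function on $[0,1]$ with $0\le u(v)\le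 1$. A horizontal strip is $U=\{(u,v):0\le u\le1,\ v_1(u)\le v\le v_2(u)\}$ for horizontal curves $0\le v_1(u)<v_2(u)\le1$; its horizontal boundaries are the graphs of $v_1,v_2$ and its vertical boundaries are $U\cap\{u=0\}$ and $U\cap\{u=1\}$. A vertical strip is $V=\{(u,v):0\le v\le1,\ u_1(v)\le u\le u_2(v)\}$ for vertical curves $0\le u_1(v)<u_2(v)\le1$; its vertical boundaries are the graphs of $u_1,u_2$ and its horizontal boundaries are $V\cap\{v=0\}$ and $V\cap\{v=1\}$. *)

theory Defs
  imports "HOL-Analysis.Analysis"
begin

definition C1_on :: "'a::real_normed_vector set \<Rightarrow> ('a \<Rightarrow> 'b::real_normed_vector) \<Rightarrow> bool" where
  "C1_on S f \<longleftrightarrow> (\<exists>f'. (\<forall>x\<in>S. (f has_derivative blinfun_apply (f' x)) (at x within S))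
                      \<and> continuous_on S f')"

definition Hg :: "(real \<Rightarrow> real \<Rightarrow> real) \<Rightarrow> bool" where
  "Hg g \<longleftrightarrow> C1_on (UNIV \<times> {0..1}) (\<lambda>(u, a). g u a) \<and>
     (\<forall>a\<in>{0<..<1}.
        g 0 a = 0 \<and> g a a = 0 \<and> g 1 a = 0 \<and>
        deriv (\<lambda>u. g u a) 0 < 0 \<and> deriv (\<lambda>u. g u a) 1 < 0 \<and> deriv (\<lambda>u. g u a) a > 0 \<and>
        (\<forall>v. (v < 0 \<or> (a < v \<and> v < 1)) \<longrightarrow> g v a > 0) \<and>
        (\<forall>v. ((0 < v \<and> v < a) \<or> 1 < v) \<longrightarrow> g v a < 0))"

definition hfun :: "real \<Rightarrow> (real \<Rightarrow> real \<Rightarrow> real) \<Rightarrow> real \<Rightarrow> real \<Rightarrow> real \<Rightarrow> real" where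
  "hfun k g v a d = (k + 1) * v - (1 / d) * g v a"

definition Hd :: "real \<Rightarrow> (real \<Rightarrow> real \<Rightarrow> real) \<Rightarrow> real \<Rightarrow> real \<Rightarrow> bool" where
  "Hd k g a d \<longleftrightarrow> (\<exists>y0\<in>{0<..<a}. \<exists>y1\<in>{a<..<1}.
      hfun k g y0 a d > k + 1 \<and> hfun k g y1 a d < 0 \<and>
      (\<forall>v\<in>{0<..<y0} \<union> {y1<..<1}. deriv (\<lambda>w. hfun k g w a d) v > 0))"

definition phi :: "real \<Rightarrow> real \<Rightarrow> real \<Rightarrow> (real \<Rightarrow> real \<Rightarrow> real) \<Rightarrow> real \<times> real \<Rightarrow> real \<times> real" where
  "phi k a d g = (\<lambda>(u, v). ((k + 1) / k * u - (1 / k) * v - g u a / (k * d), u))"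

text \<open>A curve (horizontal v = c(u) or vertical u = c(v)): continuous on [0,1] with values in [0,1].\<close>
definition unit_curve :: "(real \<Rightarrow> real) \<Rightarrow> bool" where
  "unit_curve c \<longleftrightarrow> continuous_on {0..1} c \<and> (\<forall>t\<in>{0..1}. 0 \<le> c t \<and> c t \<le> 1)"

definition strip_bounds :: "(real \<Rightarrow> real) \<Rightarrow> (real \<Rightarrow> real) \<Rightarrow> bool" where
  "strip_bounds c1 c2 \<longleftrightarrow> unit_curve c1 \<and> unit_curve c2 \<and> (\<forall>t\<in>{0..1}. c1 t < c2 t)"

definition hstrip :: "(real \<Rightarrow> real) \<Rightarrow> (real \<Rightarrow> real) \<Rightarrow> (real \<times> real) set" where
  "hstrip v1 v2 = {(u, v). 0 \<le> u \<and> u \<le> 1 \<and> v1 u \<le> v \<and> v \<le> v2 u}"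

definition hstrip_hbdry :: "(real \<Rightarrow> real) \<Rightarrow> (real \<Rightarrow> real) \<Rightarrow> (real \<times> real) set" where
  "hstrip_hbdry v1 v2 = {(u, v1 u) | u. 0 \<le> u \<and> u \<le> 1} \<union> {(u, v2 u) | u. 0 \<le> u \<and> u \<le> 1}"

definition hstrip_vbdry :: "(real \<Rightarrow> real) \<Rightarrow> (real \<Rightarrow> real) \<Rightarrow> (real \<times> real) set" where
  "hstrip_vbdry v1 v2 = (hstrip v1 v2 \<inter> {p. fst p = 0}) \<union> (hstrip v1 v2 \<inter> {p. fst p = 1})"

definition vstrip :: "(real \<Rightarrow> real) \<Rightarrow> (real \<Rightarrow> real) \<Rightarrow> (real \<times> real) set" where
  "vstrip u1 u2 = {(u, v). 0 \<le> v \<and> v \<le> 1 \<and> u1 v \<le> u \<and> u \<le> u2 v}"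

definition vstrip_vbdry :: "(real \<Rightarrow> real) \<Rightarrow> (real \<Rightarrow> real) \<Rightarrow> (real \<times> real) set" where
  "vstrip_vbdry u1 u2 = {(u1 v, v) | v. 0 \<le> v \<and> v \<le> 1} \<union> {(u2 v, v) | v. 0 \<le> v \<and> v \<le> 1}"

definition vstrip_hbdry :: "(real \<Rightarrow> real) \<Rightarrow> (real \<Rightarrow> real) \<Rightarrow> (real \<times> real) set" where
  "vstrip_hbdry u1 u2 = (vstrip u1 u2 \<inter> {p. snd p = 0}) \<union> (vstrip u1 u2 \<inter> {p. snd p = 1})"

end

theory Submission
  imports Defs
begin

text \<open>With \<open>h(u) = (k+1)u - g(u;a)/d\<close> the map is \<open>\<phi>(u,v) = ((h u - v)/k, u)\<close>, a Henon-type map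
  with global inverse \<open>(x,y) \<mapsto> (y, h y - k x)\<close>. By (Hd), \<open>h\<close> is strictly increasing on
  \<open>[0,y\<^sub>0]\<close> and on \<open>[y\<^sub>1,1]\<close>, and on each of these intervals its range contains \<open>[0,k+1]\<close>
  because \<open>h 0 = 0\<close>, \<open>h y\<^sub>0 > k+1\<close>, \<open>h y\<^sub>1 < 0\<close>, \<open>h 1 = k+1\<close>. On such a branch, with \<open>h\<^sup>-\<^sup>1\<close> the
  inverse branch, \<phi> maps the vertical strip \<open>v \<le> h u \<le> v + k\<close> onto the horizontal strip
  \<open>kx \<le> h y \<le> kx + 1\<close>, and all four boundary curves are \<open>h\<^sup>-\<^sup>1\<close> composed with affine maps.
  The two branches live over the disjoint intervals \<open>[0,y\<^sub>0]\<close> and \<open>[y\<^sub>1,1]\<close>.\<close>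

definition henon_map :: "(real \<Rightarrow> real) \<Rightarrow> real \<Rightarrow> real \<times> real \<Rightarrow> real \<times> real" where
  "henon_map h k = (\<lambda>(u, v). ((h u - v) / k, u))"

lemma henon_map_image_eq:
  assumes "k \<noteq> 0" and "\<And>x y. (x, y) \<in> B \<longleftrightarrow> (y, h y - k * x) \<in> A"
  shows "henon_map h k ` A = B"
proof (intro set_eqI iffI)
  fix z assume "z \<in> henon_map h k ` A"
  then obtain u v where "(u, v) \<in> A" "z = ((h u - v) / k, u)"
    by (auto simp: henon_map_def)
  then show "z \<in> B" using assms by simp
next
  fix z assume "z \<in> B"
  then obtain x y where z: "z = (x, y)" "(y, h y - k * x) \<in> A"
    using assms(2) by (cases z) auto
  have "henon_map h k (y, h y - k * x) = z"
    using z assms(1) by (simp add: henon_map_def)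
  then show "z \<in> henon_map h k ` A" using z(2) by force
qed

locale increasing_branch =
  fixes h :: "real \<Rightarrow> real" and k c e :: real
  assumes k_pos: "0 < k"
    and interval: "0 \<le> c" "c < e" "e \<le> 1"
    and continuous: "continuous_on {c..e} h"
    and strict_mono: "strict_mono_on {c..e} h"
    and below: "h c \<le> 0" and above: "k + 1 \<le> h e"
begin

definition hinv :: "real \<Rightarrow> real" where
  "hinv = the_inv_into {c..e} h"

lemma k_mult_bounds:
  "0 \<le> k * x \<longleftrightarrow> 0 \<le> x" "k * x \<le> k \<longleftrightarrow> x \<le> 1"
  using k_pos by (simp_all add: zero_le_mult_iff mult_le_cancel_left1)

lemma image_h: "h ` {c..e} = {h c..h e}"
proof
  show "h ` {c..e} \<subseteq> {h c..h e}"
    using strict_mono_on_leD[OF strict_mono] interval by auto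
  show "{h c..h e} \<subseteq> h ` {c..e}"
    using IVT'[of h c _ e] continuous interval by fastforce
qed

lemma hinv_eq_iff:
  assumes "t \<in> {h c..h e}"
  shows "hinv t = u \<longleftrightarrow> u \<in> {c..e} \<and> h u = t"
  using assms image_h strict_mono_on_imp_inj_on[OF strict_mono] unfolding hinv_def
  by (metis f_the_inv_into_f the_inv_into_f_f the_inv_into_into subset_refl)

lemma hinv_mem: "t \<in> {h c..h e} \<Longrightarrow> hinv t \<in> {c..e}"
  and h_hinv: "t \<in> {h c..h e} \<Longrightarrow> h (hinv t) = t"
  using hinv_eq_iff by blast+

lemma between_hinv_iff:
  assumes "s \<in> {h c..h e}" "t \<in> {h c..h e}"
  shows "hinv s \<le> y \<and> y \<le> hinv t \<longleftrightarrow> y \<in> {c..e} \<and> s \<le> h y \<and> h y \<le> t"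
proof -
  have "hinv s \<le> y \<and> y \<le> hinv t \<longleftrightarrow> y \<in> {c..e} \<and> h (hinv s) \<le> h y \<and> h y \<le> h (hinv t)"
    using hinv_mem[OF assms(1)] hinv_mem[OF assms(2)]
      strict_mono_on_less_eq[OF strict_mono, of "hinv s" y]
      strict_mono_on_less_eq[OF strict_mono, of y "hinv t"]
    by auto
  then show ?thesis using assms by (simp add: h_hinv)
qed

lemma affine_in_range:
  assumes "x \<in> {0..1}"
  shows "k * x \<in> {h c..h e}" "k * x + 1 \<in> {h c..h e}" "x \<in> {h c..h e}" "x + k \<in> {h c..h e}"
proof -
  have "0 \<le> k * x" "k * x \<le> k" using assms k_pos by (auto simp: mult_left_le)
  then show "k * x \<in> {h c..h e}" "k * x + 1 \<in> {h c..h e}" "x \<in> {h c..h e}" "x + k \<in> {h c..h e}"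
    using assms below above unfolding atLeastAtMost_iff by (intro conjI; linarith)+
qed

lemma continuous_on_hinv: "continuous_on {h c..h e} hinv"
  using continuous_on_inv_into[OF continuous compact_Icc strict_mono_on_imp_inj_on[OF strict_mono]]
  by (simp add: image_h hinv_def)

definition bottom_curve :: "real \<Rightarrow> real" where "bottom_curve x = hinv (k * x)"
definition top_curve :: "real \<Rightarrow> real" where "top_curve x = hinv (k * x + 1)"
definition left_curve :: "real \<Rightarrow> real" where "left_curve v = hinv v"
definition right_curve :: "real \<Rightarrow> real" where "right_curve v = hinv (v + k)"

lemma continuous_on_curves:
  "continuous_on {0..1} bottom_curve" "continuous_on {0..1} top_curve"
  "continuous_on {0..1} left_curve" "continuous_on {0..1} right_curve"
proof -
  have hinv_comp: "continuous_on {0..1} (\<lambda>x. hinv (f x))"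
    if "continuous_on {0..1} f" "\<And>x. x \<in> {0..1} \<Longrightarrow> f x \<in> {h c..h e}" for f
    using continuous_on_compose2[OF continuous_on_hinv that(1)] that(2) by blast
  show "continuous_on {0..1} bottom_curve" "continuous_on {0..1} top_curve"
    "continuous_on {0..1} left_curve" "continuous_on {0..1} right_curve"
    unfolding bottom_curve_def top_curve_def left_curve_def right_curve_def
    by (rule hinv_comp, intro continuous_intros, erule affine_in_range)+
qed

lemma mem_hstrip:
  "(x, y) \<in> hstrip bottom_curve top_curve \<longleftrightarrow>
     x \<in> {0..1} \<and> y \<in> {c..e} \<and> k * x \<le> h y \<and> h y \<le> k * x + 1"
proof (cases "x \<in> {0..1}")
  case True
  then show ?thesis
    using affine_in_range[OF True]
    by (simp add: hstrip_def bottom_curve_def top_curve_def between_hinv_iff)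
qed (auto simp: hstrip_def)

lemma mem_vstrip:
  "(u, v) \<in> vstrip left_curve right_curve \<longleftrightarrow>
     v \<in> {0..1} \<and> u \<in> {c..e} \<and> v \<le> h u \<and> h u \<le> v + k"
proof (cases "v \<in> {0..1}")
  case True
  then show ?thesis
    using affine_in_range[OF True]
    by (simp add: vstrip_def left_curve_def right_curve_def between_hinv_iff)
qed (auto simp: vstrip_def)

lemma mem_hstrip_hbdry:
  "(x, y) \<in> hstrip_hbdry bottom_curve top_curve \<longleftrightarrow>
     x \<in> {0..1} \<and> y \<in> {c..e} \<and> (h y = k * x \<or> h y = k * x + 1)"
proof (cases "x \<in> {0..1}")
  case True
  then show ?thesis
    using affine_in_range[OF True]
    by (auto simp: hstrip_hbdry_def bottom_curve_def top_curve_def hinv_eq_iff eq_commute[of y])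
qed (auto simp: hstrip_hbdry_def)

lemma mem_vstrip_vbdry:
  "(u, v) \<in> vstrip_vbdry left_curve right_curve \<longleftrightarrow>
     v \<in> {0..1} \<and> u \<in> {c..e} \<and> (h u = v \<or> h u = v + k)"
proof (cases "v \<in> {0..1}")
  case True
  then show ?thesis
    using affine_in_range[OF True]
    by (auto simp: vstrip_vbdry_def left_curve_def right_curve_def hinv_eq_iff eq_commute[of u])
qed (auto simp: vstrip_vbdry_def)

lemma hinv_less:
  assumes "s \<in> {h c..h e}" "t \<in> {h c..h e}" "s < t"
  shows "hinv s < hinv t"
  using strict_mono_on_less[OF strict_mono hinv_mem[OF assms(1)] hinv_mem[OF assms(2)]] assms
  by (simp add: h_hinv)

lemma hinv_in_unit_interval: "t \<in> {h c..h e} \<Longrightarrow> 0 \<le> hinv t \<and> hinv t \<le> 1"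
  using hinv_mem interval by fastforce

lemma strip_bounds_horizontal: "strip_bounds bottom_curve top_curve"
  unfolding strip_bounds_def unit_curve_def
  using continuous_on_curves affine_in_range
  by (auto simp: bottom_curve_def top_curve_def intro!: hinv_in_unit_interval hinv_less)

lemma strip_bounds_vertical: "strip_bounds left_curve right_curve"
  unfolding strip_bounds_def unit_curve_def
  using continuous_on_curves affine_in_range k_pos
  by (auto simp: left_curve_def right_curve_def intro!: hinv_in_unit_interval hinv_less)

lemma hstrip_subset: "hstrip bottom_curve top_curve \<subseteq> {0..1} \<times> {c..e}"
  using mem_hstrip by auto

lemma vstrip_subset: "vstrip left_curve right_curve \<subseteq> {c..e} \<times> {0..1}"
  using mem_vstrip by auto

lemma henon_map_vstrip: "henon_map h k ` vstrip left_curve right_curve = hstrip bottom_curve top_curve"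
  using k_pos by (intro henon_map_image_eq) (auto simp: mem_hstrip mem_vstrip k_mult_bounds)

lemma henon_map_vstrip_vbdry:
  "henon_map h k ` vstrip_vbdry left_curve right_curve = hstrip_vbdry bottom_curve top_curve"
  using k_pos
  by (intro henon_map_image_eq)
    (auto simp: hstrip_vbdry_def mem_hstrip mem_vstrip_vbdry k_mult_bounds)

lemma henon_map_vstrip_hbdry:
  "henon_map h k ` vstrip_hbdry left_curve right_curve = hstrip_hbdry bottom_curve top_curve"
  using k_pos
  by (intro henon_map_image_eq)
    (auto simp: vstrip_hbdry_def mem_vstrip mem_hstrip_hbdry k_mult_bounds)

lemma strips_in_unit_square:
  "strip_bounds bottom_curve top_curve \<and> strip_bounds left_curve right_curve \<and>
   hstrip bottom_curve top_curve \<subseteq> {0..1} \<times> {0..1} \<and>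
   vstrip left_curve right_curve \<subseteq> {0..1} \<times> {0..1} \<and>
   henon_map h k ` vstrip left_curve right_curve = hstrip bottom_curve top_curve \<and>
   henon_map h k ` vstrip_vbdry left_curve right_curve = hstrip_vbdry bottom_curve top_curve \<and>
   henon_map h k ` vstrip_hbdry left_curve right_curve = hstrip_hbdry bottom_curve top_curve"
proof -
  have "{0..1} \<times> {c..e} \<subseteq> {0..1} \<times> {0..1::real}"
    and "{c..e} \<times> {0..1} \<subseteq> {0..1} \<times> {0..1::real}"
    using interval by auto
  then show ?thesis
    using strip_bounds_horizontal strip_bounds_vertical hstrip_subset vstrip_subset
      henon_map_vstrip henon_map_vstrip_vbdry henon_map_vstrip_hbdry
    by blast
qed

end

lemma Hg_differentiable:
  assumes "Hg g" "0 < a" "a < 1"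
  shows "(\<lambda>u. g u a) differentiable (at v)"
proof -
  from assms(1) obtain G' where G': "\<forall>x\<in>UNIV \<times> {0..1}.
      ((\<lambda>(u, a). g u a) has_derivative blinfun_apply (G' x)) (at x within UNIV \<times> {0..1})"
    unfolding Hg_def C1_on_def by blast
  have "(v, a) \<in> interior (UNIV \<times> {0..(1::real)})"
    using assms by (simp add: interior_Times)
  then have "((\<lambda>(u, a). g u a) has_derivative blinfun_apply (G' (v, a))) (at (v, a))"
    using G' at_within_interior interior_subset by (metis subsetD)
  moreover have "((\<lambda>u. (u, a)) has_derivative (\<lambda>h. (h, 0))) (at v)"
    by (auto intro!: derivative_eq_intros)
  ultimately have "((\<lambda>u. g u a) has_derivative (\<lambda>h. blinfun_apply (G' (v, a)) (h, 0))) (at v)"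
    using has_derivative_compose by fastforce
  then show ?thesis unfolding differentiable_def by blast
qed

lemma hfun_differentiable:
  assumes "Hg g" "0 < a" "a < 1"
  shows "(\<lambda>w. hfun k g w a d) differentiable (at v)"
  unfolding hfun_def using Hg_differentiable[OF assms]
  by (intro differentiable_diff differentiable_mult differentiable_const differentiable_ident)

lemma hfun_continuous_on:
  assumes "Hg g" "0 < a" "a < 1"
  shows "continuous_on S (\<lambda>w. hfun k g w a d)"
  using hfun_differentiable[OF assms]
  by (meson differentiable_imp_continuous_within continuous_at_imp_continuous_on)

lemma hfun_strict_mono_on:
  assumes "Hg g" "0 < a" "a < 1"
    and pos: "\<And>v. v \<in> {c<..<e} \<Longrightarrow> 0 < deriv (\<lambda>w. hfun k g w a d) v"
  shows "strict_mono_on {c..e} (\<lambda>w. hfun k g w a d)"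
proof (rule strict_mono_onI)
  fix x y assume "x \<in> {c..e}" "y \<in> {c..e}" "x < y"
  then show "hfun k g x a d < hfun k g y a d"
  proof (intro DERIV_pos_imp_increasing_open[OF \<open>x < y\<close>])
    fix z assume "x < z" "z < y"
    then have "0 < deriv (\<lambda>w. hfun k g w a d) z"
      using pos \<open>x \<in> {c..e}\<close> \<open>y \<in> {c..e}\<close> by auto
    then show "\<exists>D. ((\<lambda>w. hfun k g w a d) has_real_derivative D) (at z) \<and> 0 < D"
      using hfun_differentiable[OF assms(1-3)] DERIV_deriv_iff_real_differentiable by blast
  qed (rule hfun_continuous_on[OF assms(1-3)])
qed

lemma phi_eq_henon_map:
  assumes "k \<noteq> 0" "d \<noteq> 0"
  shows "phi k a d g = henon_map (\<lambda>u. hfun k g u a d) k"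
  using assms by (auto simp: phi_def henon_map_def hfun_def fun_eq_iff field_simps)

theorem lemma8p2:
  fixes k a d :: real and g :: "real \<Rightarrow> real \<Rightarrow> real"
  assumes "k > 0" and "0 < a" and "a < 1" and "d > 0"
    and "Hg g" and "Hd k g a d"
  shows "\<exists>(p :: nat \<Rightarrow> real \<Rightarrow> real) (q :: nat \<Rightarrow> real \<Rightarrow> real)
            (r :: nat \<Rightarrow> real \<Rightarrow> real) (s :: nat \<Rightarrow> real \<Rightarrow> real).
      hstrip (p 0) (q 0) \<inter> hstrip (p 1) (q 1) = {} \<and>
      vstrip (r 0) (s 0) \<inter> vstrip (r 1) (s 1) = {} \<and>
      (\<forall>n\<in>{0, 1}.
         strip_bounds (p n) (q n) \<and> strip_bounds (r n) (s n) \<and>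
         hstrip (p n) (q n) \<subseteq> {0..1} \<times> {0..1} \<and>
         vstrip (r n) (s n) \<subseteq> {0..1} \<times> {0..1} \<and>
         phi k a d g ` vstrip (r n) (s n) = hstrip (p n) (q n) \<and>
         phi k a d g ` vstrip_vbdry (r n) (s n) = hstrip_vbdry (p n) (q n) \<and>
         phi k a d g ` vstrip_hbdry (r n) (s n) = hstrip_hbdry (p n) (q n))"
proof -
  let ?h = "\<lambda>u. hfun k g u a d"
  obtain y0 y1 where y0: "0 < y0" "y0 < a" and y1: "a < y1" "y1 < 1"
    and h_y0: "k + 1 < ?h y0" and h_y1: "?h y1 < 0"
    and pos: "\<And>v. v \<in> {0<..<y0} \<union> {y1<..<1} \<Longrightarrow> 0 < deriv ?h v"
    using \<open>Hd k g a d\<close> unfolding Hd_def by auto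
  have "g 0 a = 0" "g 1 a = 0" using assms(2,3,5) unfolding Hg_def by auto
  then have h_0: "?h 0 = 0" and h_1: "?h 1 = k + 1" by (simp_all add: hfun_def)
  interpret branch0: increasing_branch ?h k 0 y0
    using assms y0 h_0 h_y0 pos
    by unfold_locales (auto intro!: hfun_continuous_on hfun_strict_mono_on)
  interpret branch1: increasing_branch ?h k y1 1
    using assms y1 h_1 h_y1 pos
    by unfold_locales (auto intro!: hfun_continuous_on hfun_strict_mono_on)
  have "y0 < y1" using y0 y1 by simp
  then have disjoint:
    "hstrip branch0.bottom_curve branch0.top_curve \<inter> hstrip branch1.bottom_curve branch1.top_curve = {}"
    "vstrip branch0.left_curve branch0.right_curve \<inter> vstrip branch1.left_curve branch1.right_curve = {}"
    using branch0.hstrip_subset branch1.hstrip_subset branch0.vstrip_subset branch1.vstrip_subset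
    by fastforce+
  have phi: "phi k a d g = henon_map ?h k"
    using assms by (simp add: phi_eq_henon_map)
  show ?thesis
    by (rule exI[of _ "\<lambda>n. if n = 0 then branch0.bottom_curve else branch1.bottom_curve"],
        rule exI[of _ "\<lambda>n. if n = 0 then branch0.top_curve else branch1.top_curve"],
        rule exI[of _ "\<lambda>n. if n = 0 then branch0.left_curve else branch1.left_curve"],
        rule exI[of _ "\<lambda>n. if n = 0 then branch0.right_curve else branch1.right_curve"])
      (simp add: phi disjoint branch0.strips_in_unit_square branch1.strips_in_unit_square)
qed

end
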